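(* Let $(\mathbf L,\mathbf R)$ and $(\mathbf L',\mathbf R')$ be two pairs ($k\times n$ and $n\times k$, entries in a field $K$) with all maximal minors of $\mathbf R$ and of $\mathbf R'$ nonzero and with the same minor products: $h(\mathcal J):=\Delta_{\mathbf L}(\mathcal J)\Delta_{\mathbf R}(\mathcal J)=\Delta_{\mathbf L'}(\mathcal J)\Delta_{\mathbf R'}(\mathcal J)$ for all $\mathcal J\in\wp_k[n]$. Fix $\mathcal I\in\wp_k[n]$ with $h(\mathcal I)\ne0$, and suppose there exists an observable set $\chi(\mathcal I\mid^{ij}_{\alpha\beta})$ whose polynomial $F^{ij}_{\alpha\beta}$ has two distinct roots. If $Y_{\mathbf R}(\mathcal I)^{ij}_{\alpha\beta}=Y_{\mathbf R'}(\mathcal I)^{ij}_{\alpha\beta}$, then $Y_{\mathbf R}(\mathcal I)^{lm}_{\gamma\delta}=Y_{\mathbf R'}(\mathcal I)^{lm}_{\gamma\delta}$ for all distinct $l,m\in\mathcal I$ and distinct $\gamma,\delta\in\mathcal I^{\mathtt C}$ such that $\chi(\mathcal I\mid^{lm}_{\gamma\delta})$ is observable. That is, given the family $\{h(\mathcal J)\}$, the choice of one root of $F^{ij}_{\alpha\beta}$ as the value of $Y^{ij}_{\alpha\beta}$ determines all Y-terms with basis $\mathcal I$ associated with observable sets.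
   Context: $[n]=\{1,\dots,n\}$, $\wp_k[n]$ the $k$-subsets. For $\mathcal I\in\wp_k[n]$: $\mathcal I^{\mathtt C}=[n]\setminus\mathcal I$; $\mathcal I^i_\alpha=(\mathcal I\setminus\{i\})\cup\{\alpha\}$; $\mathcal I^{ij}_{\alpha\beta}=(\mathcal I\setminus\{i,j\})\cup\{\alpha,\beta\}$. Maximal minors: columns for $k\times n$, rows for $n\times k$ matrices. For an $n\times k$ matrix $\mathbf R$ with nonzero maximal minors, $Y_{\mathbf R}(\mathcal I)^{ij}_{\alpha\beta}:=-\mathrm{sign}[(i-\alpha)(i-\beta)(j-\alpha)(j-\beta)]\frac{\Delta_{\mathbf R}(\mathcal I^i_\alpha)\Delta_{\mathbf R}(\mathcal I^j_\beta)}{\Delta_{\mathbf R}(\mathcal I^i_\beta)\Delta_{\mathbf R}(\mathcal I^j_\alpha)}$ (distinct $i,j\in\mathcal I$, distinct $\alpha,\beta\in\mathcal I^{\mathtt C}$). $\chi(\mathcal I\mid^{ij}_{\alpha\beta}):=\{h(\mathcal I)h(\mathcal I^{ij}_{\alpha\beta}),h(\mathcal I^i_\alpha)h(\mathcal I^j_\beta),h(\mathcal I^i_\beta)h(\mathcal I^j_\alpha)\}$ (multiset), observable if not all entries are $0$. $A^{ij}_{\alpha\beta}:=h(\mathcal I)h(\mathcal I^{ij}_{\alpha\beta})-h(\mathcal I^i_\alpha)h(\mathcal I^j_\beta)-h(\mathcal I^i_\beta)h(\mathcal I^j_\alpha)$ and $F^{ij}_{\alpha\beta}(X):=h(\mathcal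 I^i_\beta)h(\mathcal I^j_\alpha)X^2-A^{ij}_{\alpha\beta}X+h(\mathcal I^i_\alpha)h(\mathcal I^j_\beta)$; one has $F^{ij}_{\alpha\beta}(Y_{\mathbf R}(\mathcal I)^{ij}_{\alpha\beta})=0$. *)

theory Defs
  imports "Jordan_Normal_Form.Determinant" "Jordan_Normal_Form.DL_Submatrix" "HOL-Library.Multiset"
begin

text \<open>Indices are 0-based: the ground set [n] is rendered as {0..<n}.\<close>

definition ksubsets :: "nat \<Rightarrow> nat \<Rightarrow> nat set set" where
  "ksubsets k n = {J. J \<subseteq> {0..<n} \<and> card J = k}"

text \<open>Maximal minors: columns J of a k x n matrix, rows J of an n x k matrix
  (selected in increasing order).\<close>
definition colMinor :: "'a::comm_ring_1 mat \<Rightarrow> nat set \<Rightarrow> 'a" where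
  "colMinor L J = det (submatrix L UNIV J)"

definition rowMinor :: "'a::comm_ring_1 mat \<Rightarrow> nat set \<Rightarrow> 'a" where
  "rowMinor R J = det (submatrix R J UNIV)"

definition swap1 :: "nat set \<Rightarrow> nat \<Rightarrow> nat \<Rightarrow> nat set" where
  "swap1 I i a = insert a (I - {i})"

definition swap2 :: "nat set \<Rightarrow> nat \<Rightarrow> nat \<Rightarrow> nat \<Rightarrow> nat \<Rightarrow> nat set" where
  "swap2 I i j a b = (I - {i, j}) \<union> {a, b}"

definition hprod :: "'a::comm_ring_1 mat \<Rightarrow> 'a mat \<Rightarrow> nat set \<Rightarrow> 'a" where
  "hprod L R J = colMinor L J * rowMinor R J"

definition Yterm :: "'a::field mat \<Rightarrow> nat set \<Rightarrow> nat \<Rightarrow> nat \<Rightarrow> nat \<Rightarrow> nat \<Rightarrow> 'a" where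
  "Yterm R I i j a b =
     - of_int (sgn ((int i - int a) * (int i - int b) * (int j - int a) * (int j - int b)))
     * (rowMinor R (swap1 I i a) * rowMinor R (swap1 I j b))
     / (rowMinor R (swap1 I i b) * rowMinor R (swap1 I j a))"

definition chi :: "(nat set \<Rightarrow> 'a::comm_ring_1) \<Rightarrow> nat set \<Rightarrow> nat \<Rightarrow> nat \<Rightarrow> nat \<Rightarrow> nat \<Rightarrow> 'a multiset" where
  "chi h I i j a b = {# h I * h (swap2 I i j a b),
                       h (swap1 I i a) * h (swap1 I j b),
                       h (swap1 I i b) * h (swap1 I j a) #}"

definition observable :: "'a::zero multiset \<Rightarrow> bool" where
  "observable M = (\<exists>x\<in>#M. x \<noteq> 0)"

definition Acoef :: "(nat set \<Rightarrow> 'a::comm_ring_1) \<Rightarrow> nat set \<Rightarrow> nat \<Rightarrow> nat \<Rightarrow> nat \<Rightarrow> nat \<Rightarrow> 'a" where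
  "Acoef h I i j a b = h I * h (swap2 I i j a b) - h (swap1 I i a) * h (swap1 I j b)
                       - h (swap1 I i b) * h (swap1 I j a)"

definition Fpoly :: "(nat set \<Rightarrow> 'a::comm_ring_1) \<Rightarrow> nat set \<Rightarrow> nat \<Rightarrow> nat \<Rightarrow> nat \<Rightarrow> nat \<Rightarrow> 'a \<Rightarrow> 'a" where
  "Fpoly h I i j a b X = h (swap1 I i b) * h (swap1 I j a) * X ^ 2 - Acoef h I i j a b * X
                         + h (swap1 I i a) * h (swap1 I j b)"

end

theory Submission
  imports Defs
begin

text \<open>
  Normalising \<open>R\<close> so that its rows \<open>I\<close> become the identity turns \<open>\<Delta>\<^sub>R(I\<^sup>x\<^sub>u)\<close> and
  \<open>\<Delta>\<^sub>R(I\<^sup>x\<^sup>y\<^sub>u\<^sub>v)\<close> into \<open>\<Delta>\<^sub>R(I)\<close> times, up to signs not depending on \<open>R\<close>, an entry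
  \<open>r u x\<close> resp. a \<open>2 \<times> 2\<close> minor of one matrix \<open>r\<close>; the same holds for \<open>L\<close> with a matrix
  \<open>l\<close>. Hence \<open>h(I\<^sup>x\<^sub>u) = l u x * r u x * h(I)\<close>, the polynomial \<open>F\<close> factors as
  \<open>h(I)\<^sup>2 (l v x l u y X + l u x l v y)(r v x r u y X + r u x r v y)\<close>, and \<open>Y\<^sub>R\<close> is a sign times
  the cross ratio of \<open>r\<close>. As \<open>R'\<close> yields the same \<open>h\<close>, minus the cross ratio of \<open>r'\<close> is a
  root of \<open>F\<close>: on every observable quadruple the cross ratio of \<open>r' / r\<close> is \<open>1\<close> or, if \<open>l\<close>
  has no zero there, equal to that of \<open>l / r\<close>.

  Value \<open>1\<close> then propagates from the given quadruple, where the two roots differ, to every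
  observable one. If it failed at a quadruple where \<open>l\<close> has no zero, the support of \<open>l\<close>
  would be a rectangle containing both quadruples; but on a rectangle where \<open>l\<close> vanishes
  nowhere, multiplicativity of cross ratios forces the value \<open>1\<close> everywhere.
\<close>

section \<open>Cross ratios\<close>

definition cross_ratio :: "(nat \<Rightarrow> nat \<Rightarrow> 'a::field) \<Rightarrow> nat \<Rightarrow> nat \<Rightarrow> nat \<Rightarrow> nat \<Rightarrow> 'a" where
  "cross_ratio f x y u v = f u x * f v y / (f v x * f u y)"

definition quad_observable :: "(nat \<Rightarrow> nat \<Rightarrow> 'a::zero) \<Rightarrow> nat \<Rightarrow> nat \<Rightarrow> nat \<Rightarrow> nat \<Rightarrow> bool" where
  "quad_observable f x y u v \<longleftrightarrow> f u x \<noteq> 0 \<and> f v y \<noteq> 0 \<or> f v x \<noteq> 0 \<and> f u y \<noteq> 0"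

definition quad_nonzero :: "(nat \<Rightarrow> nat \<Rightarrow> 'a::zero) \<Rightarrow> nat \<Rightarrow> nat \<Rightarrow> nat \<Rightarrow> nat \<Rightarrow> bool" where
  "quad_nonzero f x y u v \<longleftrightarrow> f u x \<noteq> 0 \<and> f v y \<noteq> 0 \<and> f v x \<noteq> 0 \<and> f u y \<noteq> 0"

lemma cross_ratio_transpose: "cross_ratio (\<lambda>a b. f b a) u v x y = cross_ratio f x y u v"
  by (simp add: cross_ratio_def ac_simps)

lemma quad_observable_transpose: "quad_observable (\<lambda>a b. f b a) u v x y = quad_observable f x y u v"
  by (auto simp: quad_observable_def)

lemma quad_nonzero_transpose: "quad_nonzero (\<lambda>a b. f b a) u v x y = quad_nonzero f x y u v"
  by (auto simp: quad_nonzero_def)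

lemma cross_ratio_divide:
  "cross_ratio (\<lambda>u x. f u x / g u x) x y u v = cross_ratio f x y u v / cross_ratio g x y u v"
  by (simp add: cross_ratio_def divide_inverse ac_simps)

lemma cross_ratio_mult_cols:
  assumes "f v x \<noteq> 0" "f v y \<noteq> 0"
  shows "cross_ratio f x y u v * cross_ratio f x y v w = cross_ratio f x y u w"
  using assms by (simp add: cross_ratio_def)

lemma cross_ratio_mult_rows:
  assumes "f u y \<noteq> 0" "f v y \<noteq> 0"
  shows "cross_ratio f x y u v * cross_ratio f y z u v = cross_ratio f x z u v"
  using assms by (simp add: cross_ratio_def)

lemma cross_ratio_swap_rows: "cross_ratio f y x u v = inverse (cross_ratio f x y u v)"
  by (simp add: cross_ratio_def ac_simps)

lemma cross_ratio_swap_cols: "cross_ratio f x y v u = inverse (cross_ratio f x y u v)"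
  by (simp add: cross_ratio_def ac_simps)

lemma cross_ratio_same_row:
  assumes "f u x \<noteq> 0" "f v x \<noteq> 0"
  shows "cross_ratio f x x u v = 1"
  using assms by (simp add: cross_ratio_def)

lemma cross_ratio_same_col:
  assumes "f u x \<noteq> 0" "f u y \<noteq> 0"
  shows "cross_ratio f x y u u = 1"
  using assms by (simp add: cross_ratio_def)

lemma cross_ratio_nonzero:
  assumes "f u x \<noteq> 0" "f u y \<noteq> 0" "f v x \<noteq> 0" "f v y \<noteq> 0"
  shows "cross_ratio f x y u v \<noteq> 0"
  using assms by (simp add: cross_ratio_def)

section \<open>Propagation of cross ratio one\<close>

text \<open>In the application \<open>q\<close> and
  \<open>p\<close> are the quotients \<open>r' / r\<close> and \<open>l / r\<close>, so cross ratio \<open>1\<close> for \<open>q\<close> ("agree") means equal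
  Y-terms.\<close>
locale cross_ratio_dichotomy =
  fixes q p :: "nat \<Rightarrow> nat \<Rightarrow> 'a::field" and Is Os :: "nat set"
  assumes q_nonzero: "x \<in> Is \<Longrightarrow> u \<in> Os \<Longrightarrow> q u x \<noteq> 0"
    and dichotomy: "x \<in> Is \<Longrightarrow> y \<in> Is \<Longrightarrow> x \<noteq> y \<Longrightarrow> u \<in> Os \<Longrightarrow> v \<in> Os \<Longrightarrow> u \<noteq> v \<Longrightarrow>
      quad_observable p x y u v \<Longrightarrow>
      cross_ratio q x y u v = 1 \<or> quad_nonzero p x y u v \<and> cross_ratio q x y u v = cross_ratio p x y u v"
begin

lemma transpose: "cross_ratio_dichotomy (\<lambda>a b. q b a) (\<lambda>a b. p b a) Os Is"
proof
  show "q x u \<noteq> 0" if "u \<in> Is" "x \<in> Os" for x u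
    using q_nonzero that .
  show "cross_ratio (\<lambda>a b. q b a) u v x y = 1 \<or>
      quad_nonzero (\<lambda>a b. p b a) u v x y \<and> cross_ratio (\<lambda>a b. q b a) u v x y = cross_ratio (\<lambda>a b. p b a) u v x y"
    if "u \<in> Os" "v \<in> Os" "u \<noteq> v" "x \<in> Is" "y \<in> Is" "x \<noteq> y" "quad_observable (\<lambda>a b. p b a) u v x y"
    for x y u v
    using dichotomy[of x y u v] that
    by (simp add: cross_ratio_transpose[of q] cross_ratio_transpose[of p]
        quad_observable_transpose[of p] quad_nonzero_transpose[of p])
qed

lemma agree_if_not_nonzero:
  assumes "x \<in> Is" "y \<in> Is" "x \<noteq> y" "u \<in> Os" "v \<in> Os" "u \<noteq> v"
    and "quad_observable p x y u v" "\<not> quad_nonzero p x y u v"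
  shows "cross_ratio q x y u v = 1"
  using dichotomy assms by blast

lemma agree_rows_via:
  assumes "x \<in> Is" "y \<in> Is" "z \<in> Is" "u \<in> Os" "v \<in> Os"
    and "cross_ratio q z x u v = 1" "cross_ratio q z y u v = 1"
  shows "cross_ratio q x y u v = 1"
proof -
  have "cross_ratio q x z u v = 1"
    using assms(6) by (simp add: cross_ratio_swap_rows[of q z])
  then show ?thesis
    using cross_ratio_mult_rows[of q u z v x y] assms by (simp add: q_nonzero)
qed

lemma agree_cols_via:
  assumes "x \<in> Is" "y \<in> Is" "u \<in> Os" "v \<in> Os" "w \<in> Os"
    and "cross_ratio q x y w u = 1" "cross_ratio q x y w v = 1"
  shows "cross_ratio q x y u v = 1"
proof -
  interpret T: cross_ratio_dichotomy "\<lambda>a b. q b a" "\<lambda>a b. p b a" Os Is by (rule transpose)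
  show ?thesis
    using T.agree_rows_via[of u v w x y] assms by (simp add: cross_ratio_transpose[of q])
qed

end

locale disagreeing_quad = cross_ratio_dichotomy +
  fixes a b c d :: nat
  assumes ab: "a \<in> Is" "b \<in> Is" "a \<noteq> b" and cd: "c \<in> Os" "d \<in> Os" "c \<noteq> d"
    and nonzero: "quad_nonzero p a b c d" and disagree: "cross_ratio q a b c d \<noteq> 1"
begin

lemma transpose: "disagreeing_quad (\<lambda>a b. q b a) (\<lambda>a b. p b a) Os Is c d a b"
proof -
  interpret T: cross_ratio_dichotomy "\<lambda>a b. q b a" "\<lambda>a b. p b a" Os Is by (rule transpose)
  show ?thesis
    by (intro disagreeing_quad.intro disagreeing_quad_axioms.intro T.cross_ratio_dichotomy_axioms)
      (use ab cd nonzero disagree in \<open>simp_all add: cross_ratio_transpose[of q] quad_nonzero_transpose[of p]\<close>)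
qed

lemma p_abcd: "p c a \<noteq> 0" "p d a \<noteq> 0" "p c b \<noteq> 0" "p d b \<noteq> 0"
  using nonzero by (auto simp: quad_nonzero_def)

lemma not_agree_via_row:
  assumes "z \<in> Is" "cross_ratio q z a c d = 1" "cross_ratio q z b c d = 1"
  shows False
  using agree_rows_via[of a b z c d] assms ab cd disagree by blast

lemma col_support_iff:
  assumes w: "w \<in> Os" "w \<noteq> c" "w \<noteq> d"
  shows "p w a \<noteq> 0 \<longleftrightarrow> p w b \<noteq> 0"
proof (rule ccontr)
  assume mixed: "\<not> ?thesis"
  have "cross_ratio q a b w c = 1" "cross_ratio q a b w d = 1"
    by (rule agree_if_not_nonzero;
        use ab cd w mixed p_abcd in \<open>auto simp: quad_observable_def quad_nonzero_def\<close>)+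
  then have "cross_ratio q a b c d = 1"
    using agree_cols_via ab cd w by blast
  with disagree show False ..
qed

lemma row_support_iff:
  assumes "z \<in> Is" "z \<noteq> a" "z \<noteq> b"
  shows "p c z \<noteq> 0 \<longleftrightarrow> p d z \<noteq> 0"
proof -
  interpret T: disagreeing_quad "\<lambda>a b. q b a" "\<lambda>a b. p b a" Os Is c d a b by (rule transpose)
  show ?thesis using T.col_support_iff[of z] assms by blast
qed

lemma row_support_of_interior:
  assumes z: "z \<in> Is" "z \<noteq> a" "z \<noteq> b" and w: "w \<in> Os" "w \<noteq> c" "w \<noteq> d"
    and wz: "p w z \<noteq> 0"
  shows "p c z \<noteq> 0"
proof (rule ccontr)
  assume cz: "\<not> p c z \<noteq> 0"
  then have dz: "\<not> p d z \<noteq> 0" using row_support_iff z by blast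
  have "cross_ratio q z x c d = 1" if x: "x \<in> {a, b}" for x
  proof -
    have "cross_ratio q z x w c = 1" "cross_ratio q z x w d = 1"
      by (rule agree_if_not_nonzero;
          use ab cd z w wz cz dz x p_abcd in \<open>auto simp: quad_observable_def quad_nonzero_def\<close>)+
    then show ?thesis using agree_cols_via ab cd z w x by blast
  qed
  then show False using not_agree_via_row z by blast
qed

lemma col_support_of_interior:
  assumes "z \<in> Is" "z \<noteq> a" "z \<noteq> b" "w \<in> Os" "w \<noteq> c" "w \<noteq> d" "p w z \<noteq> 0"
  shows "p w a \<noteq> 0"
proof -
  interpret T: disagreeing_quad "\<lambda>a b. q b a" "\<lambda>a b. p b a" Os Is c d a b by (rule transpose)
  show ?thesis using T.row_support_of_interior[of w z] assms by blast
qed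

lemma interior_support:
  assumes z: "z \<in> Is" "z \<noteq> a" "z \<noteq> b" and w: "w \<in> Os" "w \<noteq> c" "w \<noteq> d"
    and nz: "p c z \<noteq> 0" "p d z \<noteq> 0" "p w a \<noteq> 0" "p w b \<noteq> 0"
  shows "p w z \<noteq> 0"
proof (rule ccontr)
  assume wz: "\<not> p w z \<noteq> 0"
  have "cross_ratio q z x c d = 1" if x: "x \<in> {a, b}" for x
  proof -
    have "cross_ratio q z x w c = 1" "cross_ratio q z x w d = 1"
      by (rule agree_if_not_nonzero;
          use ab cd z w wz nz x in \<open>auto simp: quad_observable_def quad_nonzero_def\<close>)+
    then show ?thesis using agree_cols_via ab cd z w x by blast
  qed
  then show False using not_agree_via_row z by blast
qed

lemma support_rectangle:
  assumes z: "z \<in> Is" and w: "w \<in> Os"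
  shows "p w z \<noteq> 0 \<longleftrightarrow> (p c z \<noteq> 0 \<and> p d z \<noteq> 0) \<and> (p w a \<noteq> 0 \<and> p w b \<noteq> 0)"
proof (cases "z = a \<or> z = b")
  case True
  then show ?thesis
    using w p_abcd col_support_iff by (cases "w = c \<or> w = d") auto
next
  case z_interior: False
  show ?thesis
  proof (cases "w = c \<or> w = d")
    case True
    then show ?thesis using z z_interior p_abcd row_support_iff by auto
  next
    case False
    then show ?thesis
      using z w z_interior row_support_iff col_support_iff row_support_of_interior
        col_support_of_interior interior_support
      by meson
  qed
qed

end

locale nonzero_block = cross_ratio_dichotomy +
  fixes Rs Cs :: "nat set"
  assumes block: "Rs \<subseteq> Is" "Cs \<subseteq> Os"
    and p_nonzero: "z \<in> Rs \<Longrightarrow> w \<in> Cs \<Longrightarrow> p w z \<noteq> 0"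
begin

lemma transpose: "nonzero_block (\<lambda>a b. q b a) (\<lambda>a b. p b a) Os Is Cs Rs"
  using cross_ratio_dichotomy.transpose block p_nonzero
  by (intro nonzero_block.intro nonzero_block_axioms.intro transpose) auto

lemma agree_extends_col:
  assumes xy: "x \<in> Rs" "y \<in> Rs" and uv: "u \<in> Cs" "v \<in> Cs" and w: "w \<in> Cs"
    and agree: "cross_ratio q x y u v = 1" and strong: "cross_ratio p x y u v \<noteq> 1"
  shows "cross_ratio q x y u w = 1"
proof (rule ccontr)
  assume uw: "cross_ratio q x y u w \<noteq> 1"
  have in_grid: "x \<in> Is" "y \<in> Is" "u \<in> Os" "v \<in> Os" "w \<in> Os" using xy uv w block by auto
  have "x \<noteq> y"
    using strong cross_ratio_same_row[of p u x v] p_nonzero xy uv by auto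
  have "u \<noteq> w" "v \<noteq> w"
    using uw agree cross_ratio_same_col[of q u x y] q_nonzero in_grid by auto
  have "cross_ratio q x y v u = 1"
    using agree by (simp add: cross_ratio_swap_cols[of q x y v u])
  then have vw: "cross_ratio q x y v w = cross_ratio q x y u w"
    using cross_ratio_mult_cols[of q u x y v w] q_nonzero in_grid by simp
  have obs_s: "quad_observable p x y s w" "quad_nonzero p x y s w" if "s \<in> Cs" for s
    using p_nonzero xy w that by (auto simp: quad_observable_def quad_nonzero_def)
  have follows_p: "cross_ratio q x y s w = cross_ratio p x y s w"
    if "s \<in> {u, v}" "cross_ratio q x y s w \<noteq> 1" for s
    using dichotomy[of x y s w] that obs_s[of s] in_grid uv \<open>x \<noteq> y\<close> \<open>u \<noteq> w\<close> \<open>v \<noteq> w\<close>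
    by auto
  have "cross_ratio p x y u w = cross_ratio p x y v w"
    using follows_p[of u] follows_p[of v] uw vw by simp
  moreover have "cross_ratio p x y v u * cross_ratio p x y u w = cross_ratio p x y v w"
    using cross_ratio_mult_cols[of p u x y v w] p_nonzero xy uv by simp
  moreover have "cross_ratio p x y u w \<noteq> 0"
    using cross_ratio_nonzero[of p u x y w] p_nonzero xy uv w by simp
  ultimately have "cross_ratio p x y v u = 1" by simp
  then show False
    using strong by (simp add: cross_ratio_swap_cols[of p x y u v])
qed

lemma agree_extends_cols:
  assumes "x \<in> Rs" "y \<in> Rs" "u \<in> Cs" "v \<in> Cs" "u' \<in> Cs" "v' \<in> Cs"
    and "cross_ratio q x y u v = 1" "cross_ratio p x y u v \<noteq> 1"
  shows "cross_ratio q x y u' v' = 1"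
  using agree_extends_col[of x y u v u'] agree_extends_col[of x y u v v'] agree_cols_via[of x y u' v' u]
    assms block by blast

lemma agree_extends_rows:
  assumes "x \<in> Rs" "y \<in> Rs" "u \<in> Cs" "v \<in> Cs" "x' \<in> Rs" "y' \<in> Rs"
    and "cross_ratio q x y u v = 1" "cross_ratio p x y u v \<noteq> 1"
  shows "cross_ratio q x' y' u v = 1"
proof -
  interpret T: nonzero_block "\<lambda>a b. q b a" "\<lambda>a b. p b a" Os Is Cs Rs by (rule transpose)
  show ?thesis
    using T.agree_extends_cols[of u v x y x' y'] assms
    by (simp add: cross_ratio_transpose[of q] cross_ratio_transpose[of p])
qed

lemma agree_on_block:
  assumes ij: "i \<in> Rs" "j \<in> Rs" and \<alpha>\<beta>: "\<alpha> \<in> Cs" "\<beta> \<in> Cs"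
    and agree: "cross_ratio q i j \<alpha> \<beta> = 1" and strong: "cross_ratio p i j \<alpha> \<beta> \<noteq> 1"
    and ab: "a \<in> Rs" "b \<in> Rs" and cd: "c \<in> Cs" "d \<in> Cs"
  shows "cross_ratio q a b c d = 1"
proof -
  have grid: "Rs \<subseteq> Is" "Cs \<subseteq> Os" by (fact block)+
  have ij_cd: "cross_ratio q i j c d = 1"
    using agree_extends_cols ij \<alpha>\<beta> cd agree strong by blast
  have agree_i: "cross_ratio q i z c d = 1" if z: "z \<in> Rs" for z
  proof -
    have "cross_ratio p i z \<alpha> \<beta> * cross_ratio p z j \<alpha> \<beta> = cross_ratio p i j \<alpha> \<beta>"
      using cross_ratio_mult_rows[of p \<alpha> z \<beta> i j] p_nonzero z \<alpha>\<beta> by simp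
    then consider "cross_ratio p i z \<alpha> \<beta> \<noteq> 1" | "cross_ratio p z j \<alpha> \<beta> \<noteq> 1"
      using strong by force
    then show ?thesis
    proof cases
      case 1
      moreover have "cross_ratio q i z \<alpha> \<beta> = 1"
        using agree_extends_rows ij \<alpha>\<beta> z agree strong by blast
      ultimately show ?thesis using agree_extends_cols ij \<alpha>\<beta> z cd by blast
    next
      case 2
      moreover have "cross_ratio q z j \<alpha> \<beta> = 1"
        using agree_extends_rows ij \<alpha>\<beta> z agree strong by blast
      ultimately have "cross_ratio q z j c d = 1"
        using agree_extends_cols ij \<alpha>\<beta> z cd by blast
      then have "cross_ratio q j z c d = 1"
        by (simp add: cross_ratio_swap_rows[of q j z])
      moreover have "cross_ratio q j i c d = 1"
        using ij_cd by (simp add: cross_ratio_swap_rows[of q j i])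
      ultimately show ?thesis
        using agree_rows_via[of i z j c d] ij z cd grid by blast
    qed
  qed
  show ?thesis
    using agree_rows_via[of a b i c d] agree_i ab ij cd grid by blast
qed

end

context cross_ratio_dichotomy
begin

theorem agree_everywhere:
  assumes ij: "i \<in> Is" "j \<in> Is" "i \<noteq> j" and \<alpha>\<beta>: "\<alpha> \<in> Os" "\<beta> \<in> Os" "\<alpha> \<noteq> \<beta>"
    and obs0: "quad_observable p i j \<alpha> \<beta>" and agree0: "cross_ratio q i j \<alpha> \<beta> = 1"
    and strong0: "quad_nonzero p i j \<alpha> \<beta> \<Longrightarrow> cross_ratio p i j \<alpha> \<beta> \<noteq> 1"
    and xy: "x \<in> Is" "y \<in> Is" "x \<noteq> y" and uv: "u \<in> Os" "v \<in> Os" "u \<noteq> v"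
    and obs: "quad_observable p x y u v"
  shows "cross_ratio q x y u v = 1"
proof (cases "quad_nonzero p x y u v")
  case False
  then show ?thesis using agree_if_not_nonzero xy uv obs by blast
next
  case True
  show ?thesis
  proof (rule ccontr)
    assume "cross_ratio q x y u v \<noteq> 1"
    then interpret disagreeing_quad q p Is Os x y u v
      using xy uv True by unfold_locales auto
    have rect: "(p u z \<noteq> 0 \<and> p v z \<noteq> 0) \<and> (p w x \<noteq> 0 \<and> p w y \<noteq> 0)"
      if "z \<in> Is" "w \<in> Os" "p w z \<noteq> 0" for z w
      using support_rectangle that by blast
    have diagonal: "p \<alpha> i \<noteq> 0 \<and> p \<beta> j \<noteq> 0 \<or> p \<beta> i \<noteq> 0 \<and> p \<alpha> j \<noteq> 0"
      using obs0 by (simp add: quad_observable_def)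
    have rows: "p u z \<noteq> 0 \<and> p v z \<noteq> 0" if "z \<in> {i, j, x, y}" for z
      using that diagonal rect[of i \<alpha>] rect[of j \<beta>] rect[of i \<beta>] rect[of j \<alpha>] True ij \<alpha>\<beta>
      by (auto simp: quad_nonzero_def)
    have cols: "p w x \<noteq> 0 \<and> p w y \<noteq> 0" if "w \<in> {\<alpha>, \<beta>, u, v}" for w
      using that diagonal rect[of i \<alpha>] rect[of j \<beta>] rect[of i \<beta>] rect[of j \<alpha>] True ij \<alpha>\<beta>
      by (auto simp: quad_nonzero_def)
    have "p w z \<noteq> 0" if "z \<in> {i, j, x, y}" "w \<in> {\<alpha>, \<beta>, u, v}" for z w
      using support_rectangle[of z w] rows[of z] cols[of w] that ij \<alpha>\<beta> xy uv by blast
    then interpret nonzero_block q p Is Os "{i, j, x, y}" "{\<alpha>, \<beta>, u, v}"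
      by unfold_locales (use ij \<alpha>\<beta> xy uv in auto)
    have "cross_ratio p i j \<alpha> \<beta> \<noteq> 1"
      using strong0 p_nonzero by (simp add: quad_nonzero_def)
    then have "cross_ratio q x y u v = 1"
      using agree_on_block agree0 by blast
    with disagree show False ..
  qed
qed

end

section \<open>Determinants with unit rows\<close>

lemma permutes_agree_off_two:
  fixes \<sigma> \<pi> :: "nat \<Rightarrow> nat"
  assumes \<sigma>: "\<sigma> permutes {0..<k}" and \<pi>: "\<pi> permutes {0..<k}" and "a0 < k" "a1 < k"
    and agree: "\<And>a. a < k \<Longrightarrow> a \<noteq> a0 \<Longrightarrow> a \<noteq> a1 \<Longrightarrow> \<sigma> a = \<pi> a"
  shows "\<sigma> = \<pi> \<or> \<sigma> = \<pi> \<circ> Transposition.transpose a0 a1"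
proof -
  define r where "r = inv_into UNIV \<pi> \<circ> \<sigma>"
  have r: "r permutes {0..<k}"
    unfolding r_def using permutes_compose[OF \<sigma> permutes_inv[OF \<pi>]] .
  have "r a = a" if "a \<in> {0..<k} - {a0, a1}" for a
    using agree[of a] that permutes_inverses(2)[OF \<pi>] by (simp add: r_def)
  then have "r permutes {a0, a1}"
    using permutes_superset[OF r] by blast
  then have "r = id \<or> r = Transposition.transpose a0 a1"
    by (simp only: permutes_doubleton_iff)
  moreover have "\<sigma> = \<pi> \<circ> r"
    by (simp add: r_def o_assoc permutes_surj[OF \<pi>] surj_iff[THEN iffD1])
  ultimately show ?thesis by auto
qed

lemma det_eq_sum_over_supported_perms:
  fixes M :: "'a::comm_ring_1 mat"
  assumes M: "M \<in> carrier_mat k k" and S: "S \<subseteq> {\<sigma>. \<sigma> permutes {0..<k}}"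
    and vanish: "\<And>\<sigma>. \<sigma> permutes {0..<k} \<Longrightarrow> \<sigma> \<notin> S \<Longrightarrow> \<exists>a<k. M $$ (a, \<sigma> a) = 0"
  shows "det M = (\<Sum>\<sigma>\<in>S. signof \<sigma> * (\<Prod>i = 0..<k. M $$ (i, \<sigma> i)))"
  unfolding det_def'[OF M]
proof (rule sum.mono_neutral_right)
  show "\<forall>\<sigma>\<in>{\<sigma>. \<sigma> permutes {0..<k}} - S. signof \<sigma> * (\<Prod>i = 0..<k. M $$ (i, \<sigma> i)) = 0"
  proof
    fix \<sigma> assume "\<sigma> \<in> {\<sigma>. \<sigma> permutes {0..<k}} - S"
    then obtain a where "a < k" "M $$ (a, \<sigma> a) = 0" using vanish by blast
    then have "(\<Prod>i = 0..<k. M $$ (i, \<sigma> i)) = 0" by (intro prod_zero) auto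
    then show "signof \<sigma> * (\<Prod>i = 0..<k. M $$ (i, \<sigma> i)) = 0" by simp
  qed
qed (use S finite_permutations in auto)

lemma prod_unit_rows:
  fixes M :: "'a::comm_ring_1 mat"
  assumes \<pi>: "\<pi> permutes {0..<k}" and F: "F \<subseteq> {0..<k}"
    and unit: "\<And>a. a < k \<Longrightarrow> a \<notin> F \<Longrightarrow> M $$ (a, \<pi> a) = 1"
  shows "(\<Prod>i = 0..<k. M $$ (i, \<pi> i)) = (\<Prod>i\<in>F. M $$ (i, \<pi> i))"
  using unit F by (intro prod.mono_neutral_right) auto

lemma det_unit_rows_but_one:
  fixes M :: "'a::comm_ring_1 mat"
  assumes M: "M \<in> carrier_mat k k" and \<pi>: "\<pi> permutes {0..<k}" and a0: "a0 < k"
    and unit: "\<And>a b. a < k \<Longrightarrow> b < k \<Longrightarrow> a \<noteq> a0 \<Longrightarrow> M $$ (a, b) = (if b = \<pi> a then 1 else 0)"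
  shows "det M = signof \<pi> * M $$ (a0, \<pi> a0)"
proof -
  have "det M = (\<Sum>\<sigma>\<in>{\<pi>}. signof \<sigma> * (\<Prod>i = 0..<k. M $$ (i, \<sigma> i)))"
  proof (rule det_eq_sum_over_supported_perms[OF M])
    fix \<sigma> assume \<sigma>: "\<sigma> permutes {0..<k}" "\<sigma> \<notin> {\<pi>}"
    then obtain a where "a < k" "a \<noteq> a0" "\<sigma> a \<noteq> \<pi> a"
      using permutes_agree_off_two[OF \<sigma>(1) \<pi> a0 a0] by auto
    then show "\<exists>a<k. M $$ (a, \<sigma> a) = 0"
      using unit permutes_in_image[OF \<sigma>(1)] by force
  qed (use \<pi> in auto)
  also have "\<dots> = signof \<pi> * (\<Prod>i\<in>{a0}. M $$ (i, \<pi> i))"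
    using prod_unit_rows[OF \<pi>, of "{a0}" M] unit permutes_in_image[OF \<pi>] a0 by simp
  finally show ?thesis by simp
qed

lemma det_unit_rows_but_two:
  fixes M :: "'a::comm_ring_1 mat"
  assumes M: "M \<in> carrier_mat k k" and \<pi>: "\<pi> permutes {0..<k}"
    and a01: "a0 < k" "a1 < k" "a0 \<noteq> a1"
    and unit: "\<And>a b. a < k \<Longrightarrow> b < k \<Longrightarrow> a \<noteq> a0 \<Longrightarrow> a \<noteq> a1 \<Longrightarrow>
      M $$ (a, b) = (if b = \<pi> a then 1 else 0)"
  shows "det M = signof \<pi> * (M $$ (a0, \<pi> a0) * M $$ (a1, \<pi> a1) - M $$ (a0, \<pi> a1) * M $$ (a1, \<pi> a0))"
proof -
  define t where "t = Transposition.transpose a0 a1"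
  have \<pi>t: "\<pi> \<circ> t permutes {0..<k}"
    unfolding t_def using permutes_compose[OF permutes_swap_id \<pi>] a01 by simp
  have "(\<pi> \<circ> t) a0 \<noteq> \<pi> a0"
    using permutes_inj[OF \<pi>] a01 by (simp add: t_def inj_eq)
  then have "\<pi> \<circ> t \<noteq> \<pi>" by metis
  moreover have "signof (\<pi> \<circ> t) = - (signof \<pi> :: 'a)"
    using sign_compose[OF permutes_imp_permutation[OF _ \<pi>] permutation_swap_id[of a0 a1]] a01
    by (simp add: t_def sign_swap_id)
  moreover have "(\<Prod>i = 0..<k. M $$ (i, \<sigma> i)) = M $$ (a0, \<sigma> a0) * M $$ (a1, \<sigma> a1)"
    if "\<sigma> \<in> {\<pi>, \<pi> \<circ> t}" for \<sigma>
  proof -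
    have \<sigma>: "\<sigma> permutes {0..<k}" using that \<pi> \<pi>t by auto
    have "\<sigma> a = \<pi> a" if "a \<noteq> a0" "a \<noteq> a1" for a
      using \<open>\<sigma> \<in> {\<pi>, \<pi> \<circ> t}\<close> that by (auto simp: t_def)
    then have "(\<Prod>i = 0..<k. M $$ (i, \<sigma> i)) = (\<Prod>i\<in>{a0, a1}. M $$ (i, \<sigma> i))"
      using prod_unit_rows[OF \<sigma>, of "{a0, a1}" M] unit permutes_in_image[OF \<pi>] a01 by simp
    then show ?thesis using a01 by simp
  qed
  moreover have "det M = (\<Sum>\<sigma>\<in>{\<pi>, \<pi> \<circ> t}. signof \<sigma> * (\<Prod>i = 0..<k. M $$ (i, \<sigma> i)))"
  proof (rule det_eq_sum_over_supported_perms[OF M])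
    fix \<sigma> assume \<sigma>: "\<sigma> permutes {0..<k}" "\<sigma> \<notin> {\<pi>, \<pi> \<circ> t}"
    then obtain a where "a < k" "a \<noteq> a0" "a \<noteq> a1" "\<sigma> a \<noteq> \<pi> a"
      using permutes_agree_off_two[OF \<sigma>(1) \<pi> a01(1,2)] by (auto simp: t_def)
    then show "\<exists>a<k. M $$ (a, \<sigma> a) = 0"
      using unit permutes_in_image[OF \<sigma>(1)] by force
  qed (use \<pi> \<pi>t in auto)
  ultimately show ?thesis
    by (simp add: t_def algebra_simps)
qed

definition index_in :: "nat set \<Rightarrow> nat \<Rightarrow> nat" where
  "index_in I w = card {z\<in>I. z < w}"

lemma pick_index_in: "w \<in> I \<Longrightarrow> pick I (index_in I w) = w"
  unfolding index_in_def by (rule pick_card_in_set)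

lemma index_in_less: "finite I \<Longrightarrow> w \<in> I \<Longrightarrow> index_in I w < card I"
  unfolding index_in_def by (rule psubset_card_mono) auto

lemma index_in_pick: "a < card I \<Longrightarrow> index_in I (pick I a) = a"
  unfolding index_in_def using card_pick by blast

lemma index_in_inj: "w \<in> I \<Longrightarrow> w' \<in> I \<Longrightarrow> index_in I w = index_in I w' \<longleftrightarrow> w = w'"
  using pick_index_in by metis

lemma pick_neq_if_index_neq: "a < card J \<Longrightarrow> a \<noteq> index_in J w \<Longrightarrow> pick J a \<noteq> w"
  using index_in_pick by metis

definition index_perm :: "nat set \<Rightarrow> nat set \<Rightarrow> (nat \<Rightarrow> nat) \<Rightarrow> nat \<Rightarrow> nat" where
  "index_perm I J \<phi> a = (if a < card J then index_in I (\<phi> (pick J a)) else a)"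

lemma index_perm_permutes:
  assumes J: "finite J" and \<phi>: "bij_betw \<phi> J I"
  shows "index_perm I J \<phi> permutes {0..<card J}"
proof -
  have I: "finite I" "card I = card J"
    using bij_betw_finite[OF \<phi>] J bij_betw_same_card[OF \<phi>] by simp_all
  have in_J: "pick J a \<in> J" if "a < card J" for a
    using that by (simp add: pick_in_set)
  have in_I: "\<phi> (pick J a) \<in> I" if "a < card J" for a
    using in_J[OF that] \<phi> by (auto simp: bij_betw_def)
  have inj: "inj_on (index_perm I J \<phi>) {0..<card J}"
  proof (rule inj_onI)
    fix a b assume a: "a \<in> {0..<card J}" and b: "b \<in> {0..<card J}"
      and eq: "index_perm I J \<phi> a = index_perm I J \<phi> b"
    have a': "a < card J" and b': "b < card J" using a b by auto
    then have "index_in I (\<phi> (pick J a)) = index_in I (\<phi> (pick J b))"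
      using eq by (simp add: index_perm_def)
    then have "\<phi> (pick J a) = \<phi> (pick J b)"
      using index_in_inj[OF in_I[OF a'] in_I[OF b']] by blast
    then have "pick J a = pick J b"
      using inj_onD[OF bij_betw_imp_inj_on[OF \<phi>]] in_J[OF a'] in_J[OF b'] by blast
    then show "a = b"
      using index_in_pick[OF a'] index_in_pick[OF b'] by metis
  qed
  have "index_perm I J \<phi> a < card J" if "a < card J" for a
    using in_I[OF that] index_in_less[OF I(1)] I(2) that by (simp add: index_perm_def)
  then have "index_perm I J \<phi> ` {0..<card J} \<subseteq> {0..<card J}"
    by auto
  then have "bij_betw (index_perm I J \<phi>) {0..<card J} {0..<card J}"
    using inj endo_inj_surj[OF _ _ inj] by (simp add: bij_betw_def)
  moreover have "{a. index_perm I J \<phi> a \<noteq> a} \<subseteq> {0..<card J}"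
    by (auto simp: index_perm_def)
  ultimately show ?thesis
    by (simp add: permutes_altdef)
qed

lemma bij_betw_swap1:
  assumes "x \<in> I" "u \<notin> I"
  shows "bij_betw (id(u := x)) (swap1 I x u) I"
proof -
  have "id(u := x) ` swap1 I x u = I"
    using assms by (auto simp: swap1_def)
  moreover have "inj_on (id(u := x)) (swap1 I x u)"
    using assms by (auto simp: swap1_def inj_on_def)
  ultimately show ?thesis by (simp add: bij_betw_def)
qed

lemma bij_betw_swap2:
  assumes "x \<in> I" "y \<in> I" "x \<noteq> y" "u \<notin> I" "v \<notin> I" "u \<noteq> v"
  shows "bij_betw (id(u := x, v := y)) (swap2 I x y u v) I"
proof -
  have "id(u := x, v := y) ` swap2 I x y u v = I"
    using assms by (auto simp: swap2_def)
  moreover have "inj_on (id(u := x, v := y)) (swap2 I x y u v)"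
    using assms by (auto simp: swap2_def inj_on_def)
  ultimately show ?thesis by (simp add: bij_betw_def)
qed

lemma card_rows_below: "J \<subseteq> {0..<n} \<Longrightarrow> card {i. i < n \<and> i \<in> J} = card J"
  by (rule arg_cong[of _ _ card]) auto

lemma submatrix_rows_carrier:
  assumes "C \<in> carrier_mat n k" "J \<subseteq> {0..<n}" "card J = k"
  shows "submatrix C J UNIV \<in> carrier_mat k k"
proof (rule carrier_matI)
  show "dim_row (submatrix C J UNIV) = k"
    using assms card_rows_below[of J n] by (simp add: dim_submatrix)
  show "dim_col (submatrix C J UNIV) = k"
    using assms by (simp add: dim_submatrix)
qed

lemma submatrix_rows_index:
  assumes "C \<in> carrier_mat n k" "J \<subseteq> {0..<n}" "card J = k" "a < k" "b < k"
  shows "submatrix C J UNIV $$ (a, b) = C $$ (pick J a, b)"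
  using submatrix_index[of a C J b UNIV] assms card_rows_below[of J n] by (simp add: pick_UNIV)

lemma submatrix_unit_row:
  assumes C: "C \<in> carrier_mat n k" and I: "I \<subseteq> {0..<n}" "card I = k"
    and unit: "\<And>a b. a < k \<Longrightarrow> b < k \<Longrightarrow> C $$ (pick I a, b) = (if a = b then 1 else 0)"
    and J: "J \<subseteq> {0..<n}" "card J = k" and ab: "a < k" "b < k"
    and fixed: "pick J a \<in> I" "\<phi> (pick J a) = pick J a"
  shows "submatrix C J UNIV $$ (a, b) = (if b = index_perm I J \<phi> a then 1 else 0)"
proof -
  have finite: "finite I" using I finite_subset by blast
  have "submatrix C J UNIV $$ (a, b) = C $$ (pick I (index_in I (pick J a)), b)"
    using submatrix_rows_index[OF C J ab] pick_index_in[OF fixed(1)] by simp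
  also have "\<dots> = (if index_in I (pick J a) = b then 1 else 0)"
    using unit index_in_less[OF finite fixed(1)] I(2) ab(2) by simp
  finally show ?thesis
    using fixed(2) ab(1) J(2) by (auto simp: index_perm_def)
qed

definition swap1_sign :: "nat set \<Rightarrow> nat \<Rightarrow> nat \<Rightarrow> 'a::comm_ring_1" where
  "swap1_sign I x u = signof (index_perm I (swap1 I x u) (id(u := x)))"

definition swap2_sign :: "nat set \<Rightarrow> nat \<Rightarrow> nat \<Rightarrow> nat \<Rightarrow> nat \<Rightarrow> 'a::comm_ring_1" where
  "swap2_sign I x y u v = signof (index_perm I (swap2 I x y u v) (id(u := x, v := y)))"

lemma signof_square: "signof p * signof p = (1 :: 'a::comm_ring_1)"
  using signof_pm_one[of p] by (auto simp: sign_def)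

lemma swap1_sign_square: "swap1_sign I x u * swap1_sign I x u = (1 :: 'a::comm_ring_1)"
  unfolding swap1_sign_def by (rule signof_square)

lemma swap2_sign_square: "swap2_sign I x y u v * swap2_sign I x y u v = (1 :: 'a::comm_ring_1)"
  unfolding swap2_sign_def by (rule signof_square)

lemma det_submatrix_swap1:
  fixes C :: "'a::comm_ring_1 mat"
  assumes C: "C \<in> carrier_mat n k" and I: "I \<subseteq> {0..<n}" "card I = k"
    and unit: "\<And>a b. a < k \<Longrightarrow> b < k \<Longrightarrow> C $$ (pick I a, b) = (if a = b then 1 else 0)"
    and x: "x \<in> I" and u: "u \<in> {0..<n} - I"
  shows "det (submatrix C (swap1 I x u) UNIV) = swap1_sign I x u * C $$ (u, index_in I x)"
proof -
  let ?J = "swap1 I x u" and ?\<phi> = "id(u := x)"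
  let ?\<sigma> = "index_perm I ?J ?\<phi>" and ?M = "submatrix C ?J UNIV"
  have fin: "finite I" "finite ?J" using I finite_subset by (auto simp: swap1_def)
  have bij: "bij_betw ?\<phi> ?J I" using bij_betw_swap1 x u by blast
  have J: "?J \<subseteq> {0..<n}" "card ?J = k"
    using I x u bij_betw_same_card[OF bij] by (auto simp: swap1_def)
  have \<sigma>: "?\<sigma> permutes {0..<k}" using index_perm_permutes[OF fin(2) bij] J(2) by simp
  define a0 where "a0 = index_in ?J u"
  have uJ: "u \<in> ?J" by (simp add: swap1_def)
  have a0: "a0 < k" "pick ?J a0 = u"
    using index_in_less[OF fin(2) uJ] pick_index_in[OF uJ] J(2) by (simp_all add: a0_def)
  have "det ?M = signof ?\<sigma> * ?M $$ (a0, ?\<sigma> a0)"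
  proof (rule det_unit_rows_but_one[OF submatrix_rows_carrier[OF C J] \<sigma> a0(1)])
    fix a b assume ab: "a < k" "b < k" and "a \<noteq> a0"
    then have "pick ?J a \<noteq> u" using pick_neq_if_index_neq J(2) by (simp add: a0_def)
    moreover have "pick ?J a \<in> ?J" using ab J(2) by (simp add: pick_in_set)
    ultimately have "pick ?J a \<in> I" "?\<phi> (pick ?J a) = pick ?J a" by (auto simp: swap1_def)
    then show "?M $$ (a, b) = (if b = ?\<sigma> a then 1 else 0)"
      using submatrix_unit_row[OF C I unit J ab] by blast
  qed
  moreover have "?\<sigma> a0 = index_in I x" using a0 J(2) by (simp add: index_perm_def)
  moreover have "?M $$ (a0, index_in I x) = C $$ (u, index_in I x)"
    using submatrix_rows_index[OF C J a0(1)] a0(2) index_in_less[OF fin(1) x] I(2) by simp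
  ultimately show ?thesis by (simp add: swap1_sign_def)
qed

lemma det_submatrix_swap2:
  fixes C :: "'a::comm_ring_1 mat"
  assumes C: "C \<in> carrier_mat n k" and I: "I \<subseteq> {0..<n}" "card I = k"
    and unit: "\<And>a b. a < k \<Longrightarrow> b < k \<Longrightarrow> C $$ (pick I a, b) = (if a = b then 1 else 0)"
    and xy: "x \<in> I" "y \<in> I" "x \<noteq> y" and uv: "u \<in> {0..<n} - I" "v \<in> {0..<n} - I" "u \<noteq> v"
  shows "det (submatrix C (swap2 I x y u v) UNIV) = swap2_sign I x y u v *
    (C $$ (u, index_in I x) * C $$ (v, index_in I y) - C $$ (u, index_in I y) * C $$ (v, index_in I x))"
proof -
  let ?J = "swap2 I x y u v" and ?\<phi> = "id(u := x, v := y)"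
  let ?\<sigma> = "index_perm I ?J ?\<phi>" and ?M = "submatrix C ?J UNIV"
  have fin: "finite I" "finite ?J" using I finite_subset by (auto simp: swap2_def)
  have bij: "bij_betw ?\<phi> ?J I" using bij_betw_swap2 xy uv by blast
  have J: "?J \<subseteq> {0..<n}" "card ?J = k"
    using I xy uv bij_betw_same_card[OF bij] by (auto simp: swap2_def)
  have \<sigma>: "?\<sigma> permutes {0..<k}" using index_perm_permutes[OF fin(2) bij] J(2) by simp
  define a0 where "a0 = index_in ?J u"
  define a1 where "a1 = index_in ?J v"
  have uvJ: "u \<in> ?J" "v \<in> ?J" by (auto simp: swap2_def)
  have a0: "a0 < k" "pick ?J a0 = u"
    using index_in_less[OF fin(2) uvJ(1)] pick_index_in[OF uvJ(1)] J(2) by (simp_all add: a0_def)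
  have a1: "a1 < k" "pick ?J a1 = v"
    using index_in_less[OF fin(2) uvJ(2)] pick_index_in[OF uvJ(2)] J(2) by (simp_all add: a1_def)
  have "a0 \<noteq> a1" using a0 a1 uv by metis
  have "det ?M = signof ?\<sigma> * (?M $$ (a0, ?\<sigma> a0) * ?M $$ (a1, ?\<sigma> a1) - ?M $$ (a0, ?\<sigma> a1) * ?M $$ (a1, ?\<sigma> a0))"
  proof (rule det_unit_rows_but_two[OF submatrix_rows_carrier[OF C J] \<sigma> a0(1) a1(1) \<open>a0 \<noteq> a1\<close>])
    fix a b assume ab: "a < k" "b < k" and "a \<noteq> a0" "a \<noteq> a1"
    then have "pick ?J a \<noteq> u" "pick ?J a \<noteq> v"
      using pick_neq_if_index_neq J(2) by (simp_all add: a0_def a1_def)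
    moreover have "pick ?J a \<in> ?J" using ab J(2) by (simp add: pick_in_set)
    ultimately have "pick ?J a \<in> I" "?\<phi> (pick ?J a) = pick ?J a" by (auto simp: swap2_def)
    then show "?M $$ (a, b) = (if b = ?\<sigma> a then 1 else 0)"
      using submatrix_unit_row[OF C I unit J ab] by blast
  qed
  moreover have "?\<sigma> a0 = index_in I x" "?\<sigma> a1 = index_in I y"
    using a0 a1 uv J(2) by (simp_all add: index_perm_def)
  moreover have "?M $$ (a, index_in I z) = C $$ (pick ?J a, index_in I z)"
    if "a \<in> {a0, a1}" "z \<in> {x, y}" for a z
    using submatrix_rows_index[OF C J] a0 a1 index_in_less[OF fin(1)] xy I(2) that by auto
  ultimately show ?thesis using a0(2) a1(2) by (simp add: swap2_sign_def)
qed

lemma swap1_ksubsets: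
  assumes "I \<in> ksubsets k n" "x \<in> I" "u \<in> {0..<n} - I"
  shows "swap1 I x u \<in> ksubsets k n"
  using assms bij_betw_same_card[OF bij_betw_swap1[of x I u]] by (auto simp: ksubsets_def swap1_def)

lemma swap2_ksubsets:
  assumes "I \<in> ksubsets k n" "x \<in> I" "y \<in> I" "x \<noteq> y" "u \<in> {0..<n} - I" "v \<in> {0..<n} - I" "u \<noteq> v"
  shows "swap2 I x y u v \<in> ksubsets k n"
  using assms bij_betw_same_card[OF bij_betw_swap2[of x I y u v]] by (auto simp: ksubsets_def swap2_def)

section \<open>Normalising a matrix on the rows \<open>I\<close>\<close>

lemma submatrix_mult_rows:
  assumes A: "A \<in> carrier_mat n m" and B: "B \<in> carrier_mat m p" and J: "J \<subseteq> {0..<n}"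
  shows "submatrix (A * B) J UNIV = submatrix A J UNIV * B"
proof (rule eq_matI)
  fix i j
  assume "i < dim_row (submatrix A J UNIV * B)" and "j < dim_col (submatrix A J UNIV * B)"
  then have i: "i < card {i. i < n \<and> i \<in> J}" and j: "j < p"
    using A B by (simp_all add: dim_submatrix)
  have pick: "pick J i < n"
    using pick_in_set[of i J] i J card_rows_below[OF J] by auto
  have "row (submatrix A J UNIV) i = row A (pick J i)"
    by (rule eq_vecI) (use submatrix_index[of i A J _ UNIV] i A pick in \<open>auto simp: pick_UNIV dim_submatrix\<close>)
  then show "submatrix (A * B) J UNIV $$ (i, j) = (submatrix A J UNIV * B) $$ (i, j)"
    using submatrix_index[of i "A * B" J j UNIV] i j A B pick by (simp add: pick_UNIV dim_submatrix)
qed (use A B in \<open>simp_all add: dim_submatrix\<close>)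

lemma transpose_submatrix:
  assumes J: "J \<subseteq> {0..<dim_col L}"
  shows "transpose_mat (submatrix L UNIV J) = submatrix (transpose_mat L) J UNIV"
proof (rule eq_matI)
  fix i j
  assume "i < dim_row (submatrix (transpose_mat L) J UNIV)" "j < dim_col (submatrix (transpose_mat L) J UNIV)"
  then have i: "i < card {i. i < dim_col L \<and> i \<in> J}" and j: "j < dim_row L"
    by (simp_all add: dim_submatrix)
  have pick: "pick J i < dim_col L"
    using pick_in_set[of i J] i J card_rows_below[OF J] by auto
  show "transpose_mat (submatrix L UNIV J) $$ (i, j) = submatrix (transpose_mat L) J UNIV $$ (i, j)"
    using submatrix_index[of j L UNIV i J] submatrix_index[of i "transpose_mat L" J j UNIV] i j pick
    by (simp add: dim_submatrix pick_UNIV)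
qed (simp_all add: dim_submatrix)

lemma colMinor_eq_rowMinor_transpose:
  assumes L: "L \<in> carrier_mat k n" and J: "J \<subseteq> {0..<n}" "card J = k"
  shows "colMinor L J = rowMinor (transpose_mat L) J"
proof -
  have "submatrix L UNIV J \<in> carrier_mat k k"
    using L card_rows_below[OF J(1)] J(2) by (intro carrier_matI) (simp_all add: dim_submatrix)
  then show ?thesis
    unfolding colMinor_def rowMinor_def using det_transpose transpose_submatrix[of J L] J L by force
qed

text \<open>\<open>adj B / det B\<close> inverts the rows \<open>B\<close> of \<open>R\<close> indexed by \<open>I\<close>, so these rows become
  the identity.\<close>
definition reduced_mat :: "'a::field mat \<Rightarrow> nat set \<Rightarrow> 'a mat" where
  "reduced_mat R I = (1 / rowMinor R I) \<cdot>\<^sub>m (R * adj_mat (submatrix R I UNIV))"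

context
  fixes R :: "'a::field mat" and n k :: nat and I :: "nat set"
  assumes R: "R \<in> carrier_mat n k" and I: "I \<in> ksubsets k n" and RI: "rowMinor R I \<noteq> 0"
begin

private lemma rows_I_carrier: "submatrix R I UNIV \<in> carrier_mat k k"
  using submatrix_rows_carrier[OF R] I by (auto simp: ksubsets_def)

lemma reduced_mat_carrier: "reduced_mat R I \<in> carrier_mat n k"
  using R adj_mat(1)[OF rows_I_carrier] by (simp add: reduced_mat_def)

lemma reduced_mat_mult: "reduced_mat R I * submatrix R I UNIV = R"
proof -
  let ?B = "submatrix R I UNIV"
  note adj = adj_mat[OF rows_I_carrier]
  have "reduced_mat R I * ?B = (1 / det ?B) \<cdot>\<^sub>m ((R * adj_mat ?B) * ?B)"
    unfolding reduced_mat_def rowMinor_def by (rule mult_smult_assoc_mat) (use R adj(1) rows_I_carrier in auto)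
  also have "(R * adj_mat ?B) * ?B = R * (det ?B \<cdot>\<^sub>m 1\<^sub>m k)"
    using assoc_mult_mat[OF R adj(1) rows_I_carrier] adj(3) by simp
  also have "\<dots> = det ?B \<cdot>\<^sub>m R"
    using mult_smult_distrib[OF R one_carrier_mat] right_mult_one_mat[OF R] by simp
  finally show ?thesis
    using RI R by (intro eq_matI) (auto simp: rowMinor_def)
qed

lemma rowMinor_eq_reduced_minor:
  assumes J: "J \<in> ksubsets k n"
  shows "rowMinor R J = det (submatrix (reduced_mat R I) J UNIV) * rowMinor R I"
proof -
  have J': "J \<subseteq> {0..<n}" "card J = k" using J by (auto simp: ksubsets_def)
  have "submatrix R J UNIV = submatrix (reduced_mat R I) J UNIV * submatrix R I UNIV"
    using submatrix_mult_rows[OF reduced_mat_carrier rows_I_carrier J'(1)] reduced_mat_mult by simp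
  then show ?thesis
    unfolding rowMinor_def
    using det_mult[OF submatrix_rows_carrier[OF reduced_mat_carrier J'] rows_I_carrier] by simp
qed

lemma reduced_mat_unit_rows:
  assumes "a < k" "b < k"
  shows "reduced_mat R I $$ (pick I a, b) = (if a = b then 1 else 0)"
proof -
  let ?S = "submatrix (reduced_mat R I) I UNIV" and ?B = "submatrix R I UNIV"
  have I': "I \<subseteq> {0..<n}" "card I = k" using I by (auto simp: ksubsets_def)
  have S: "?S \<in> carrier_mat k k" using submatrix_rows_carrier[OF reduced_mat_carrier I'] .
  have "?S * ?B = ?B"
    using submatrix_mult_rows[OF reduced_mat_carrier rows_I_carrier I'(1)] reduced_mat_mult by simp
  then have "?S * (?B * adj_mat ?B) = ?B * adj_mat ?B"
    using assoc_mult_mat[OF S rows_I_carrier adj_mat(1)[OF rows_I_carrier]] by simp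
  then have "det ?B \<cdot>\<^sub>m ?S = det ?B \<cdot>\<^sub>m 1\<^sub>m k"
    using adj_mat(2)[OF rows_I_carrier] mult_smult_distrib[OF S one_carrier_mat] right_mult_one_mat[OF S] by simp
  then have "?S = 1\<^sub>m k"
  proof (intro eq_matI)
    fix a b assume eq: "det ?B \<cdot>\<^sub>m ?S = det ?B \<cdot>\<^sub>m 1\<^sub>m k"
      and ab: "a < dim_row (1\<^sub>m k)" "b < dim_col (1\<^sub>m k)"
    have "(det ?B \<cdot>\<^sub>m ?S) $$ (a, b) = (det ?B \<cdot>\<^sub>m 1\<^sub>m k) $$ (a, b)" using eq by simp
    then show "?S $$ (a, b) = 1\<^sub>m k $$ (a, b)"
      using RI S ab by (auto simp: rowMinor_def)
  qed (use S in auto)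
  then show ?thesis
    using submatrix_rows_index[OF reduced_mat_carrier I' assms] assms by simp
qed

end

definition reduced_coord :: "'a::field mat \<Rightarrow> nat set \<Rightarrow> nat \<Rightarrow> nat \<Rightarrow> 'a" where
  "reduced_coord R I u x = reduced_mat R I $$ (u, index_in I x)"

lemma rowMinor_swap1:
  assumes R: "R \<in> carrier_mat n k" and I: "I \<in> ksubsets k n" and RI: "rowMinor R I \<noteq> 0"
    and x: "x \<in> I" and u: "u \<in> {0..<n} - I"
  shows "rowMinor R (swap1 I x u) = swap1_sign I x u * reduced_coord R I u x * rowMinor R I"
  using rowMinor_eq_reduced_minor[OF R I RI swap1_ksubsets[OF I x u]]
    det_submatrix_swap1[OF reduced_mat_carrier[OF R I RI] _ _ reduced_mat_unit_rows[OF R I RI] x u] I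
  by (simp add: ksubsets_def reduced_coord_def)

lemma rowMinor_swap2:
  assumes R: "R \<in> carrier_mat n k" and I: "I \<in> ksubsets k n" and RI: "rowMinor R I \<noteq> 0"
    and xy: "x \<in> I" "y \<in> I" "x \<noteq> y" and uv: "u \<in> {0..<n} - I" "v \<in> {0..<n} - I" "u \<noteq> v"
  shows "rowMinor R (swap2 I x y u v) = swap2_sign I x y u v *
    (reduced_coord R I u x * reduced_coord R I v y - reduced_coord R I u y * reduced_coord R I v x) *
    rowMinor R I"
  using rowMinor_eq_reduced_minor[OF R I RI swap2_ksubsets[OF I xy uv]]
    det_submatrix_swap2[OF reduced_mat_carrier[OF R I RI] _ _ reduced_mat_unit_rows[OF R I RI] xy uv] I
  by (simp add: ksubsets_def reduced_coord_def)

section \<open>Minor products and Y-terms\<close>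

lemma hprod_eq_rowMinor_transpose:
  assumes "L \<in> carrier_mat k n" "J \<in> ksubsets k n"
  shows "hprod L R J = rowMinor (transpose_mat L) J * rowMinor R J"
  using colMinor_eq_rowMinor_transpose[of L k n J] assms by (simp add: hprod_def ksubsets_def)

context
  fixes L R :: "'a::field mat" and n k :: nat and I :: "nat set"
  assumes L: "L \<in> carrier_mat k n" and R: "R \<in> carrier_mat n k" and I: "I \<in> ksubsets k n"
    and hI: "hprod L R I \<noteq> 0"
begin

private lemma minors_I: "rowMinor (transpose_mat L) I \<noteq> 0" "rowMinor R I \<noteq> 0"
  using hI hprod_eq_rowMinor_transpose[OF L I] by auto

lemma hprod_swap1:
  assumes "x \<in> I" "u \<in> {0..<n} - I"
  shows "hprod L R (swap1 I x u) =
    reduced_coord (transpose_mat L) I u x * reduced_coord R I u x * hprod L R I"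
proof -
  let ?s = "swap1_sign I x u :: 'a" and ?L = "transpose_mat L"
  have "hprod L R (swap1 I x u) =
    (?s * reduced_coord ?L I u x * rowMinor ?L I) * (?s * reduced_coord R I u x * rowMinor R I)"
    using hprod_eq_rowMinor_transpose[OF L swap1_ksubsets[OF I assms]] L
      rowMinor_swap1[OF _ I minors_I(1) assms] rowMinor_swap1[OF R I minors_I(2) assms] by simp
  also have "\<dots> = (?s * ?s) * (reduced_coord ?L I u x * reduced_coord R I u x) * (rowMinor ?L I * rowMinor R I)"
    by (simp only: ac_simps)
  finally show ?thesis
    by (simp only: swap1_sign_square mult_1_left hprod_eq_rowMinor_transpose[OF L I])
qed

lemma hprod_swap2:
  assumes "x \<in> I" "y \<in> I" "x \<noteq> y" "u \<in> {0..<n} - I" "v \<in> {0..<n} - I" "u \<noteq> v"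
  shows "hprod L R (swap2 I x y u v) =
    (reduced_coord (transpose_mat L) I u x * reduced_coord (transpose_mat L) I v y
      - reduced_coord (transpose_mat L) I u y * reduced_coord (transpose_mat L) I v x) *
    (reduced_coord R I u x * reduced_coord R I v y - reduced_coord R I u y * reduced_coord R I v x) *
    hprod L R I"
proof -
  let ?s = "swap2_sign I x y u v :: 'a" and ?L = "transpose_mat L"
  let ?dL = "reduced_coord ?L I u x * reduced_coord ?L I v y - reduced_coord ?L I u y * reduced_coord ?L I v x"
  let ?dR = "reduced_coord R I u x * reduced_coord R I v y - reduced_coord R I u y * reduced_coord R I v x"
  have "hprod L R (swap2 I x y u v) = (?s * ?dL * rowMinor ?L I) * (?s * ?dR * rowMinor R I)"
    using hprod_eq_rowMinor_transpose[OF L swap2_ksubsets[OF I assms]] L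
      rowMinor_swap2[OF _ I minors_I(1) assms] rowMinor_swap2[OF R I minors_I(2) assms] by simp
  also have "\<dots> = (?s * ?s) * (?dL * ?dR) * (rowMinor ?L I * rowMinor R I)"
    by (simp only: ac_simps)
  finally show ?thesis
    by (simp only: swap2_sign_square mult_1_left hprod_eq_rowMinor_transpose[OF L I])
qed

end

definition yterm_sign :: "nat set \<Rightarrow> nat \<Rightarrow> nat \<Rightarrow> nat \<Rightarrow> nat \<Rightarrow> 'a::field" where
  "yterm_sign I x y u v =
    - of_int (sgn ((int x - int u) * (int x - int v) * (int y - int u) * (int y - int v)))
    * (swap1_sign I x u * swap1_sign I y v) / (swap1_sign I x v * swap1_sign I y u)"

lemma swap1_sign_nonzero: "swap1_sign I x u \<noteq> (0 :: 'a::comm_ring_1)"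
  using swap1_sign_square[of I x u, where 'a = 'a] by auto

lemma yterm_sign_nonzero:
  assumes "x \<noteq> u" "x \<noteq> v" "y \<noteq> u" "y \<noteq> v"
  shows "(yterm_sign I x y u v :: 'a::field) \<noteq> 0"
proof -
  have "(int x - int u) * (int x - int v) * (int y - int u) * (int y - int v) \<noteq> 0"
    using assms by simp
  then have "of_int (sgn ((int x - int u) * (int x - int v) * (int y - int u) * (int y - int v))) \<noteq> (0 :: 'a)"
    by (auto simp: sgn_if)
  then show ?thesis
    using swap1_sign_nonzero[where 'a = 'a] by (simp add: yterm_sign_def)
qed

lemma Yterm_eq_cross_ratio:
  assumes R: "R \<in> carrier_mat n k" and I: "I \<in> ksubsets k n" and RI: "rowMinor R I \<noteq> 0"
    and xy: "x \<in> I" "y \<in> I" and uv: "u \<in> {0..<n} - I" "v \<in> {0..<n} - I"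
  shows "Yterm R I x y u v = yterm_sign I x y u v * cross_ratio (reduced_coord R I) x y u v"
proof -
  let ?g = "- of_int (sgn ((int x - int u) * (int x - int v) * (int y - int u) * (int y - int v))) :: 'a"
  let ?s = "swap1_sign I :: nat \<Rightarrow> nat \<Rightarrow> 'a" and ?r = "reduced_coord R I" and ?D = "rowMinor R I"
  have "Yterm R I x y u v = ?g * (?s x u * ?s y v * (?r u x * ?r v y) * (?D * ?D))
      / (?s x v * ?s y u * (?r v x * ?r u y) * (?D * ?D))"
    unfolding Yterm_def rowMinor_swap1[OF R I RI xy(1) uv(1)] rowMinor_swap1[OF R I RI xy(2) uv(2)]
      rowMinor_swap1[OF R I RI xy(1) uv(2)] rowMinor_swap1[OF R I RI xy(2) uv(1)]
    by (simp only: ac_simps)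
  also have "\<dots> = ?g * (?s x u * ?s y v) * (?r u x * ?r v y) / (?s x v * ?s y u * (?r v x * ?r u y))"
    using RI by (simp only: mult.assoc[symmetric] nonzero_mult_divide_mult_cancel_right mult_eq_0_iff) simp
  finally show ?thesis
    by (simp add: yterm_sign_def cross_ratio_def times_divide_times_eq)
qed

lemma Fpoly_factor:
  fixes h :: "nat set \<Rightarrow> 'a::field"
  assumes "h (swap1 I x u) = l u x * r u x * h I" "h (swap1 I x v) = l v x * r v x * h I"
    "h (swap1 I y u) = l u y * r u y * h I" "h (swap1 I y v) = l v y * r v y * h I"
    and "h (swap2 I x y u v) = (l u x * l v y - l u y * l v x) * (r u x * r v y - r u y * r v x) * h I"
  shows "Fpoly h I x y u v X =
    h I * h I * (l v x * l u y * X + l u x * l v y) * (r v x * r u y * X + r u x * r v y)"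
  unfolding Fpoly_def Acoef_def assms by (simp add: algebra_simps power2_eq_square)

lemma factored_root_cases:
  fixes l r :: "nat \<Rightarrow> nat \<Rightarrow> 'a::field"
  assumes root: "(l v x * l u y * z + l u x * l v y) * (r v x * r u y * z + r u x * r v y) = 0"
    and r: "r v x * r u y \<noteq> 0"
  shows "z = - cross_ratio r x y u v \<or> l v x * l u y \<noteq> 0 \<and> z = - cross_ratio l x y u v
    \<or> l v x * l u y = 0 \<and> l u x * l v y = 0"
proof -
  have linear: "c * z + d = 0 \<Longrightarrow> c \<noteq> 0 \<Longrightarrow> z = - (d / c)" for c d :: 'a
    by (simp add: field_simps add_eq_0_iff2)
  from root consider "l v x * l u y * z + l u x * l v y = 0" | "r v x * r u y * z + r u x * r v y = 0"
    by auto
  then show ?thesis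
  proof cases
    case 1
    then show ?thesis
      using linear[OF 1] by (cases "l v x * l u y = 0") (auto simp: cross_ratio_def mult_ac)
  next
    case 2
    then show ?thesis using linear[OF 2 r] by (simp add: cross_ratio_def mult_ac)
  qed
qed

locale equal_minor_products =
  fixes L R L' R' :: "'a::field mat" and k n :: nat and I :: "nat set"
  assumes L: "L \<in> carrier_mat k n" and R: "R \<in> carrier_mat n k"
    and L': "L' \<in> carrier_mat k n" and R': "R' \<in> carrier_mat n k"
    and R_minors: "\<forall>J\<in>ksubsets k n. rowMinor R J \<noteq> 0"
    and R'_minors: "\<forall>J\<in>ksubsets k n. rowMinor R' J \<noteq> 0"
    and same_hprod: "\<forall>J\<in>ksubsets k n. hprod L R J = hprod L' R' J"
    and I: "I \<in> ksubsets k n" and hI: "hprod L R I \<noteq> 0"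
begin

abbreviation "h \<equiv> hprod L R"
abbreviation "cL \<equiv> reduced_coord (transpose_mat L) I"
abbreviation "cR \<equiv> reduced_coord R I"
abbreviation "cL' \<equiv> reduced_coord (transpose_mat L') I"
abbreviation "cR' \<equiv> reduced_coord R' I"
abbreviation "qR \<equiv> \<lambda>u x. cR' u x / cR u x"
abbreviation "pL \<equiv> \<lambda>u x. cL u x / cR u x"

lemma hI': "hprod L' R' I \<noteq> 0"
  using hI same_hprod I by simp

lemma cR_nonzero:
  assumes "x \<in> I" "u \<in> {0..<n} - I"
  shows "cR u x \<noteq> 0" and "cR' u x \<noteq> 0"
  using rowMinor_swap1[OF R I _ assms] rowMinor_swap1[OF R' I _ assms]
    R_minors R'_minors swap1_ksubsets[OF I assms] I by auto

lemma quotient_cross_ratios: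
  assumes "x \<in> I" "y \<in> I" "u \<in> {0..<n} - I" "v \<in> {0..<n} - I"
  shows "cross_ratio qR x y u v = 1 \<longleftrightarrow> cross_ratio cR' x y u v = cross_ratio cR x y u v"
    and "cross_ratio pL x y u v = 1 \<longleftrightarrow> cross_ratio cL x y u v = cross_ratio cR x y u v"
    and "cross_ratio qR x y u v = cross_ratio pL x y u v \<longleftrightarrow>
      cross_ratio cR' x y u v = cross_ratio cL x y u v"
    and "quad_observable pL x y u v \<longleftrightarrow> quad_observable cL x y u v"
    and "quad_nonzero pL x y u v \<longleftrightarrow> quad_nonzero cL x y u v"
proof -
  have nz: "cR u x \<noteq> 0" "cR v x \<noteq> 0" "cR u y \<noteq> 0" "cR v y \<noteq> 0"
    using cR_nonzero assms by auto
  then have "cross_ratio cR x y u v \<noteq> 0" using cross_ratio_nonzero[of cR u x y v] by simp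
  then show "cross_ratio qR x y u v = 1 \<longleftrightarrow> cross_ratio cR' x y u v = cross_ratio cR x y u v"
    and "cross_ratio pL x y u v = 1 \<longleftrightarrow> cross_ratio cL x y u v = cross_ratio cR x y u v"
    and "cross_ratio qR x y u v = cross_ratio pL x y u v \<longleftrightarrow>
      cross_ratio cR' x y u v = cross_ratio cL x y u v"
    by (simp_all add: cross_ratio_divide)
  show "quad_observable pL x y u v \<longleftrightarrow> quad_observable cL x y u v"
    and "quad_nonzero pL x y u v \<longleftrightarrow> quad_nonzero cL x y u v"
    using nz by (auto simp: quad_observable_def quad_nonzero_def)
qed

lemma Fpoly_factor_both:
  assumes q: "x \<in> I" "y \<in> I" "x \<noteq> y" "u \<in> {0..<n} - I" "v \<in> {0..<n} - I" "u \<noteq> v"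
  shows "Fpoly h I x y u v X =
      h I * h I * (cL v x * cL u y * X + cL u x * cL v y) * (cR v x * cR u y * X + cR u x * cR v y)"
    and "Fpoly h I x y u v X =
      h I * h I * (cL' v x * cL' u y * X + cL' u x * cL' v y) * (cR' v x * cR' u y * X + cR' u x * cR' v y)"
proof -
  show "Fpoly h I x y u v X =
      h I * h I * (cL v x * cL u y * X + cL u x * cL v y) * (cR v x * cR u y * X + cR u x * cR v y)"
    using q by (intro Fpoly_factor hprod_swap1[OF L R I hI] hprod_swap2[OF L R I hI]) auto
  have "Fpoly h I x y u v X = Fpoly (hprod L' R') I x y u v X"
    unfolding Fpoly_def Acoef_def
    using same_hprod I swap1_ksubsets[OF I] swap2_ksubsets[OF I q] q by simp
  also have "\<dots> = hprod L' R' I * hprod L' R' I *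
      (cL' v x * cL' u y * X + cL' u x * cL' v y) * (cR' v x * cR' u y * X + cR' u x * cR' v y)"
    using q by (intro Fpoly_factor hprod_swap1[OF L' R' I hI'] hprod_swap2[OF L' R' I hI']) auto
  finally show "Fpoly h I x y u v X =
      h I * h I * (cL' v x * cL' u y * X + cL' u x * cL' v y) * (cR' v x * cR' u y * X + cR' u x * cR' v y)"
    using same_hprod I by simp
qed

lemma quad_observable_if_observable:
  assumes q: "x \<in> I" "y \<in> I" "x \<noteq> y" "u \<in> {0..<n} - I" "v \<in> {0..<n} - I" "u \<noteq> v"
    and obs: "observable (chi h I x y u v)"
  shows "quad_observable pL x y u v"
  unfolding quotient_cross_ratios(4)[OF q(1,2,4,5)]
proof (rule ccontr)
  assume "\<not> quad_observable cL x y u v"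
  then have zero: "cL u x * cL v y = 0" "cL u y * cL v x = 0"
    by (auto simp: quad_observable_def)
  have "h (swap2 I x y u v) = 0"
    using hprod_swap2[OF L R I hI q] zero by simp
  moreover have "h (swap1 I x u) * h (swap1 I y v) = (cL u x * cL v y) * (cR u x * cR v y * (h I * h I))"
    "h (swap1 I x v) * h (swap1 I y u) = (cL u y * cL v x) * (cR v x * cR u y * (h I * h I))"
    using hprod_swap1[OF L R I hI] q by (simp_all add: ac_simps)
  ultimately show False
    using obs zero by (simp add: observable_def chi_def)
qed

text \<open>\<open>- cross_ratio cR'\<close> is a root of \<open>F\<close>, whose roots are \<open>- cross_ratio cR\<close> and
  \<open>- cross_ratio cL\<close>.\<close>
lemma cross_ratio_cR'_cases:
  assumes q: "x \<in> I" "y \<in> I" "x \<noteq> y" "u \<in> {0..<n} - I" "v \<in> {0..<n} - I" "u \<noteq> v"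
    and obs: "quad_observable cL x y u v"
  shows "cross_ratio cR' x y u v = cross_ratio cR x y u v
    \<or> quad_nonzero cL x y u v \<and> cross_ratio cR' x y u v = cross_ratio cL x y u v"
proof -
  let ?z = "- cross_ratio cR' x y u v"
  have nz: "cR u x \<noteq> 0" "cR v x \<noteq> 0" "cR u y \<noteq> 0" "cR v y \<noteq> 0"
    "cR' u x \<noteq> 0" "cR' v x \<noteq> 0" "cR' u y \<noteq> 0" "cR' v y \<noteq> 0"
    using cR_nonzero q by auto
  have "cR' v x * cR' u y * ?z + cR' u x * cR' v y = 0"
    using nz by (simp add: cross_ratio_def)
  then have "Fpoly h I x y u v ?z = 0"
    using Fpoly_factor_both(2)[OF q] by simp
  then have "(cL v x * cL u y * ?z + cL u x * cL v y) * (cR v x * cR u y * ?z + cR u x * cR v y) = 0"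
    using Fpoly_factor_both(1)[OF q] hI by simp
  moreover have "?z \<noteq> 0"
    using cross_ratio_nonzero[of cR' u x y v] nz by simp
  ultimately show ?thesis
    using factored_root_cases[of cL v x u y ?z cR] nz obs
    by (auto simp: quad_observable_def quad_nonzero_def cross_ratio_def)
qed

lemma quotients_dichotomy: "cross_ratio_dichotomy qR pL I ({0..<n} - I)"
proof
  fix x y u v
  assume q: "x \<in> I" "y \<in> I" "x \<noteq> y" "u \<in> {0..<n} - I" "v \<in> {0..<n} - I" "u \<noteq> v"
    and "quad_observable pL x y u v"
  then show "cross_ratio qR x y u v = 1 \<or>
      quad_nonzero pL x y u v \<and> cross_ratio qR x y u v = cross_ratio pL x y u v"
    using cross_ratio_cR'_cases[OF q] quotient_cross_ratios[OF q(1,2,4,5)] by simp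
qed (use cR_nonzero in auto)

lemma cross_ratio_pL_ne_one:
  assumes q: "x \<in> I" "y \<in> I" "x \<noteq> y" "u \<in> {0..<n} - I" "v \<in> {0..<n} - I" "u \<noteq> v"
    and roots: "\<exists>z w. z \<noteq> w \<and> Fpoly h I x y u v z = 0 \<and> Fpoly h I x y u v w = 0"
    and nonzero: "quad_nonzero pL x y u v"
  shows "cross_ratio pL x y u v \<noteq> 1"
proof
  assume "cross_ratio pL x y u v = 1"
  then have eq: "cross_ratio cL x y u v = cross_ratio cR x y u v"
    using quotient_cross_ratios(2)[OF q(1,2,4,5)] by simp
  have "z = - cross_ratio cR x y u v" if "Fpoly h I x y u v z = 0" for z
    using that Fpoly_factor_both(1)[OF q] hI factored_root_cases[of cL v x u y z cR] cR_nonzero q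
      nonzero eq quotient_cross_ratios(5)[OF q(1,2,4,5)] by (auto simp: quad_nonzero_def)
  then show False using roots by blast
qed

lemma Yterm_eq_iff:
  assumes "x \<in> I" "y \<in> I" "u \<in> {0..<n} - I" "v \<in> {0..<n} - I"
  shows "Yterm R I x y u v = Yterm R' I x y u v \<longleftrightarrow> cross_ratio qR x y u v = 1"
  using Yterm_eq_cross_ratio[OF R I _ assms] Yterm_eq_cross_ratio[OF R' I _ assms]
    yterm_sign_nonzero[of x u v y I] R_minors R'_minors I assms quotient_cross_ratios(1)[OF assms]
  by auto

end

theorem mainTheorem17:
  fixes L R L' R' :: "'a::field mat" and k n :: nat and I :: "nat set"
    and i j \<alpha> \<beta> :: nat
  assumes L: "L \<in> carrier_mat k n" and R: "R \<in> carrier_mat n k"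
    and L': "L' \<in> carrier_mat k n" and R': "R' \<in> carrier_mat n k"
    and Rnz: "\<forall>J\<in>ksubsets k n. rowMinor R J \<noteq> 0"
    and R'nz: "\<forall>J\<in>ksubsets k n. rowMinor R' J \<noteq> 0"
    and hsame: "\<forall>J\<in>ksubsets k n. hprod L R J = hprod L' R' J"
    and I: "I \<in> ksubsets k n" and hI: "hprod L R I \<noteq> 0"
    and ij: "i \<in> I" "j \<in> I" "i \<noteq> j"
    and \<alpha>\<beta>: "\<alpha> \<in> {0..<n} - I" "\<beta> \<in> {0..<n} - I" "\<alpha> \<noteq> \<beta>"
    and obs: "observable (chi (hprod L R) I i j \<alpha> \<beta>)"
    and roots: "\<exists>x y. x \<noteq> y \<and> Fpoly (hprod L R) I i j \<alpha> \<beta> x = 0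
                          \<and> Fpoly (hprod L R) I i j \<alpha> \<beta> y = 0"
    and Yeq: "Yterm R I i j \<alpha> \<beta> = Yterm R' I i j \<alpha> \<beta>"
  shows "\<forall>l m \<gamma> \<delta>. l \<in> I \<and> m \<in> I \<and> l \<noteq> m \<and> \<gamma> \<in> {0..<n} - I \<and> \<delta> \<in> {0..<n} - I
           \<and> \<gamma> \<noteq> \<delta> \<and> observable (chi (hprod L R) I l m \<gamma> \<delta>)
           \<longrightarrow> Yterm R I l m \<gamma> \<delta> = Yterm R' I l m \<gamma> \<delta>"
proof (intro allI impI, elim conjE)
  fix l m \<gamma> \<delta>
  assume lm: "l \<in> I" "m \<in> I" "l \<noteq> m" and \<gamma>\<delta>: "\<gamma> \<in> {0..<n} - I" "\<delta> \<in> {0..<n} - I" "\<gamma> \<noteq> \<delta>"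
    and obs_lm: "observable (chi (hprod L R) I l m \<gamma> \<delta>)"
  interpret E: equal_minor_products L R L' R' k n I
    using assms by unfold_locales
  interpret cross_ratio_dichotomy E.qR E.pL I "{0..<n} - I"
    by (rule E.quotients_dichotomy)
  have "cross_ratio E.qR l m \<gamma> \<delta> = 1"
  proof (rule agree_everywhere[OF ij \<alpha>\<beta> _ _ _ lm \<gamma>\<delta>])
    show "quad_observable E.pL i j \<alpha> \<beta>" "quad_observable E.pL l m \<gamma> \<delta>"
      using E.quad_observable_if_observable ij \<alpha>\<beta> obs lm \<gamma>\<delta> obs_lm by blast+
    show "cross_ratio E.qR i j \<alpha> \<beta> = 1"
      using Yeq E.Yterm_eq_iff ij \<alpha>\<beta> by blast
    show "quad_nonzero E.pL i j \<alpha> \<beta> \<Longrightarrow> cross_ratio E.pL i j \<alpha> \<beta> \<noteq> 1"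
      using E.cross_ratio_pL_ne_one[OF ij \<alpha>\<beta> roots] .
  qed
  then show "Yterm R I l m \<gamma> \<delta> = Yterm R' I l m \<gamma> \<delta>"
    using E.Yterm_eq_iff lm \<gamma>\<delta> by blast
qed

end
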